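(* Let $\gamma_X$ and $\gamma_Y$ be any two dynamic metric spaces. Then \[d_{\mathrm{I}}(\beta_0^{\gamma_X},\beta_0^{\gamma_Y})\le 2\cdot d_{\mathtt{dyn}}(\gamma_X,\gamma_Y).\]
   Context: A dynamic metric space (DMS) is a pair $\gamma_X=(X,d_X(\cdot))$ where $X$ is a nonempty finite set and $d_X(\cdot):\mathbf{R}\times X\times X\to\mathbf{R}_+$ satisfies: each $d_X(t)$ is a pseudometric, some $d_X(t_0)$ is a metric, and $t\mapsto d_X(t)(x,x')$ is continuous for all $x,x'$. $\mathbf{Int}$ is the set of finite closed intervals of $\mathbf{R}$. For $I\in\mathbf{Int}$, $(\bigvee_I d_X)(x,x'):=\min_{s\in I}d_X(s)(x,x')$; for $I=[u,u']$, $I^\varepsilon=[u-\varepsilon,u'+\varepsilon]$, and $[t]^\varepsilon=[t-\varepsilon,t+\varepsilon]$. A tripod between $X$ and $Y$ is a set $Z$ with surjections $\varphi_X:Z\to X$, $\varphi_Y:Z\to Y$; it is an $\varepsilon$-tripod between $\gamma_X,\gamma_Y$ if for all $t\in\mathbf{R}$, $z,z'\in Z$: $(\bigvee_{[t]^\varepsilon}d_X)(\varphi_X(z),\varphi_X(z'))\le d_Y(t)(\varphi_Y(z),\varphi_Y(z'))+2\varepsilon$ and $(\bigvee_{[t]^\varepsilon}d_Y)(\varphi_Y(z),\varphi_Y(z'))\le d_X(t)(\varphi_X(z),\varphi_X(z'))+2\varepsilon$. $d_{\mathtt{dyn}}(\gamma_X,\gamma_Y)$ is the minimum over tripods of the infimum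 of $\varepsilon$ for which the tripod is an $\varepsilon$-tripod ($\infty$ if none). For symmetric $d$ vanishing on the diagonal, $\mathcal{R}_\delta(X,d)$ is the simplicial complex on $X$ with simplices the nonempty $\sigma$ with $d(x,x')\le\delta$ for all $x,x'\in\sigma$. The Betti-0 function $\beta_0^{\gamma_X}:\mathbf{Int}\times\mathbf{R}_+\to\mathbf{Z}_+$ sends $(I,\delta)$ to $\dim\mathrm{H}_0(\mathcal{R}_\delta(X,\bigvee_I d_X))$ (homology over a fixed field). For functions $F,G:\mathbf{Int}\times\mathbf{R}_+\to\mathbf{Z}_+$, $d_{\mathrm{I}}(F,G):=\inf\{\varepsilon\ge0:\forall (I,\delta),\ F(I,\delta)\ge G(I^\varepsilon,\delta+\varepsilon)\text{ and }G(I,\delta)\ge F(I^\varepsilon,\delta+\varepsilon)\}$. *)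

theory Defs
  imports "HOL-Analysis.Analysis" "HOL-Library.Extended_Real"
begin

(* A dynamic metric space on the carrier X (of type 'a), with d :: time => point => point => real *)

definition pseudometric_on :: "'a set \<Rightarrow> ('a \<Rightarrow> 'a \<Rightarrow> real) \<Rightarrow> bool" where
  "pseudometric_on X d \<longleftrightarrow>
     (\<forall>x\<in>X. \<forall>y\<in>X. d x y \<ge> 0) \<and>
     (\<forall>x\<in>X. d x x = 0) \<and>
     (\<forall>x\<in>X. \<forall>y\<in>X. d x y = d y x) \<and>
     (\<forall>x\<in>X. \<forall>y\<in>X. \<forall>z\<in>X. d x z \<le> d x y + d y z)"

definition metric_on :: "'a set \<Rightarrow> ('a \<Rightarrow> 'a \<Rightarrow> real) \<Rightarrow> bool" where
  "metric_on X d \<longleftrightarrow> pseudometric_on X d \<and> (\<forall>x\<in>X. \<forall>y\<in>X. d x y = 0 \<longrightarrow> x = y)"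

definition is_DMS :: "'a set \<Rightarrow> (real \<Rightarrow> 'a \<Rightarrow> 'a \<Rightarrow> real) \<Rightarrow> bool" where
  "is_DMS X d \<longleftrightarrow>
     finite X \<and> X \<noteq> {} \<and>
     (\<forall>t. pseudometric_on X (d t)) \<and>
     (\<exists>t0. metric_on X (d t0)) \<and>
     (\<forall>x\<in>X. \<forall>x'\<in>X. continuous_on UNIV (\<lambda>t. d t x x'))"

(* (\<Or>_I d)(x,x') for I = [u,u'] : minimum over s in I of d(s)(x,x') *)
definition vee :: "real \<Rightarrow> real \<Rightarrow> (real \<Rightarrow> 'a \<Rightarrow> 'a \<Rightarrow> real) \<Rightarrow> 'a \<Rightarrow> 'a \<Rightarrow> real" where
  "vee u u' d x x' = Inf ((\<lambda>s. d s x x') ` {u..u'})"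

(* A tripod is represented by its image Z \<subseteq> X \<times> Y, with phi_X = fst, phi_Y = snd *)
definition is_tripod :: "'a set \<Rightarrow> 'b set \<Rightarrow> ('a \<times> 'b) set \<Rightarrow> bool" where
  "is_tripod X Y Z \<longleftrightarrow> Z \<subseteq> X \<times> Y \<and> fst ` Z = X \<and> snd ` Z = Y"

definition is_eps_tripod ::
  "real \<Rightarrow> 'a set \<Rightarrow> (real \<Rightarrow> 'a \<Rightarrow> 'a \<Rightarrow> real) \<Rightarrow> 'b set \<Rightarrow> (real \<Rightarrow> 'b \<Rightarrow> 'b \<Rightarrow> real)
     \<Rightarrow> ('a \<times> 'b) set \<Rightarrow> bool" where
  "is_eps_tripod \<epsilon> X dX Y dY Z \<longleftrightarrow> is_tripod X Y Z \<and>
     (\<forall>t. \<forall>z\<in>Z. \<forall>z'\<in>Z.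
        vee (t - \<epsilon>) (t + \<epsilon>) dX (fst z) (fst z') \<le> dY t (snd z) (snd z') + 2 * \<epsilon> \<and>
        vee (t - \<epsilon>) (t + \<epsilon>) dY (snd z) (snd z') \<le> dX t (fst z) (fst z') + 2 * \<epsilon>)"

(* d_dyn: infimum over tripods of the infimum of admissible eps (\<infinity> if none) *)
definition d_dyn ::
  "'a set \<Rightarrow> (real \<Rightarrow> 'a \<Rightarrow> 'a \<Rightarrow> real) \<Rightarrow> 'b set \<Rightarrow> (real \<Rightarrow> 'b \<Rightarrow> 'b \<Rightarrow> real) \<Rightarrow> ereal" where
  "d_dyn X dX Y dY =
     (INF Z\<in>{Z. is_tripod X Y Z}. Inf (ereal ` {\<epsilon>. \<epsilon> \<ge> 0 \<and> is_eps_tripod \<epsilon> X dX Y dY Z}))"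

definition rips :: "'a set \<Rightarrow> ('a \<Rightarrow> 'a \<Rightarrow> real) \<Rightarrow> real \<Rightarrow> 'a set set" where
  "rips X d \<delta> = {\<sigma>. \<sigma> \<noteq> {} \<and> \<sigma> \<subseteq> X \<and> (\<forall>x\<in>\<sigma>. \<forall>x'\<in>\<sigma>. d x x' \<le> \<delta>)}"

(* dim H_0 of a simplicial complex K on vertex set X = number of connected components,
   i.e. the number of classes of the equivalence relation generated by "lie in a common simplex" *)
definition betti0_complex :: "'a set \<Rightarrow> 'a set set \<Rightarrow> nat" where
  "betti0_complex X K = card (X // ({(x, y). \<exists>\<sigma>\<in>K. x \<in> \<sigma> \<and> y \<in> \<sigma>}\<^sup>*))"

(* Betti-0 function; the interval I = [u,u'] is encoded by its endpoints (u \<le> u') *)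
definition betti0_fun :: "'a set \<Rightarrow> (real \<Rightarrow> 'a \<Rightarrow> 'a \<Rightarrow> real) \<Rightarrow> real \<Rightarrow> real \<Rightarrow> real \<Rightarrow> nat" where
  "betti0_fun X d u u' \<delta> = betti0_complex X (rips X (vee u u' d) \<delta>)"

definition d_I :: "(real \<Rightarrow> real \<Rightarrow> real \<Rightarrow> nat) \<Rightarrow> (real \<Rightarrow> real \<Rightarrow> real \<Rightarrow> nat) \<Rightarrow> ereal" where
  "d_I F G = Inf (ereal ` {\<epsilon>. \<epsilon> \<ge> 0 \<and>
     (\<forall>u u' \<delta>. u \<le> u' \<and> \<delta> \<ge> 0 \<longrightarrow>
        F u u' \<delta> \<ge> G (u - \<epsilon>) (u' + \<epsilon>) (\<delta> + \<epsilon>) \<and>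
        G u u' \<delta> \<ge> F (u - \<epsilon>) (u' + \<epsilon>) (\<delta> + \<epsilon>))})"

end

theory Submission
  imports Defs
begin

text \<open>An \<open>\<epsilon>\<close>-tripod transfers minima over time intervals: if \<open>(\<Or>\<^sub>I d\<^sub>X)(x, x')\<close> is
  attained at \<open>s \<in> I\<close>, the tripod inequality at time \<open>s\<close> bounds \<open>(\<Or>\<^bsub>I\<^sup>\<epsilon>\<^esub> d\<^sub>Y)(y, y')\<close>
  by \<open>(\<Or>\<^sub>I d\<^sub>X)(x, x') + 2\<epsilon>\<close>. Hence if the first components of two points of the tripod
  are adjacent in the Rips complex of \<open>\<Or>\<^sub>I d\<^sub>X\<close> at scale \<open>\<delta>\<close>, their second components are
  adjacent in that of \<open>\<Or>\<^bsub>I\<^sup>2\<^sup>\<epsilon>\<^esub> d\<^sub>Y\<close> at scale \<open>\<delta> + 2\<epsilon>\<close>. Following the tripod along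
  paths, every connected component of the second complex is the image of one of the first,
  so the second has at most as many components. Tripods are symmetric, so every
  \<open>\<epsilon>\<close>-tripod yields a \<open>2\<epsilon>\<close>-interleaving of the Betti-0 functions.\<close>

definition shares_simplex :: "'a set set \<Rightarrow> ('a \<times> 'a) set" where
  "shares_simplex K = {(x, y). \<exists>\<sigma>\<in>K. x \<in> \<sigma> \<and> y \<in> \<sigma>}"

lemma betti0_fun_eq_card_quotient:
  "betti0_fun X d u u' \<delta> = card (X // (shares_simplex (rips X (vee u u' d) \<delta>))\<^sup>*)"
  unfolding betti0_fun_def betti0_complex_def shares_simplex_def by simp

lemma shares_simplex_rips_iff:
  assumes "\<And>x. x \<in> X \<Longrightarrow> d x x \<le> \<delta>" and "\<And>x y. x \<in> X \<Longrightarrow> y \<in> X \<Longrightarrow> d x y = d y x"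
  shows "(x, y) \<in> shares_simplex (rips X d \<delta>) \<longleftrightarrow> x \<in> X \<and> y \<in> X \<and> d x y \<le> \<delta>"
proof
  assume "x \<in> X \<and> y \<in> X \<and> d x y \<le> \<delta>"
  then have "{x, y} \<in> rips X d \<delta>"
    using assms unfolding rips_def by auto
  then show "(x, y) \<in> shares_simplex (rips X d \<delta>)"
    unfolding shares_simplex_def by blast
qed (auto simp: shares_simplex_def rips_def)

lemma vee_attained:
  assumes "u \<le> u'" and "continuous_on {u..u'} (\<lambda>s. d s x x')"
  obtains s where "s \<in> {u..u'}" and "vee u u' d x x' = d s x x'"
proof -
  obtain s where s: "s \<in> {u..u'}" "\<forall>t\<in>{u..u'}. d s x x' \<le> d t x x'"
    using continuous_attains_inf[OF compact_Icc _ assms(2)] assms(1) by auto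
  then have "vee u u' d x x' = d s x x'"
    unfolding vee_def by (intro cInf_eq_minimum) auto
  with s(1) show thesis using that by blast
qed

lemma vee_antimono:
  assumes "a \<le> c" and "c \<le> e" and "e \<le> b" and "\<And>s. 0 \<le> d s x x'"
  shows "vee a b d x x' \<le> vee c e d x x'"
  unfolding vee_def
proof (rule cInf_superset_mono)
  show "bdd_below ((\<lambda>s. d s x x') ` {a..b})"
    using assms(4) by (auto intro: bdd_belowI[of _ 0])
qed (use assms in auto)

lemma vee_self: "u \<le> u' \<Longrightarrow> (\<And>s. d s x x = 0) \<Longrightarrow> vee u u' d x x = 0"
  unfolding vee_def by simp

lemma vee_commute: "(\<And>s. d s x y = d s y x) \<Longrightarrow> vee u u' d x y = vee u u' d y x"
  unfolding vee_def by simp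

lemma is_DMSD:
  assumes "is_DMS X d"
  shows "finite X"
    and "x \<in> X \<Longrightarrow> y \<in> X \<Longrightarrow> 0 \<le> d t x y"
    and "x \<in> X \<Longrightarrow> d t x x = 0"
    and "x \<in> X \<Longrightarrow> y \<in> X \<Longrightarrow> d t x y = d t y x"
    and "x \<in> X \<Longrightarrow> y \<in> X \<Longrightarrow> continuous_on A (\<lambda>t. d t x y)"
  using assms continuous_on_subset unfolding is_DMS_def pseudometric_on_def by blast+

lemma is_eps_tripod_swap:
  "is_eps_tripod \<epsilon> X dX Y dY Z \<Longrightarrow> is_eps_tripod \<epsilon> Y dY X dX (prod.swap ` Z)"
  unfolding is_eps_tripod_def is_tripod_def by (auto simp: image_image)

lemma is_eps_tripod_vee_le:
  assumes "is_DMS X dX" and "is_DMS Y dY" and T: "is_eps_tripod \<epsilon> X dX Y dY Z"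
    and "0 \<le> \<epsilon>" and "u \<le> u'" and "z \<in> Z" and "z' \<in> Z"
  shows "vee (u - \<epsilon>) (u' + \<epsilon>) dY (snd z) (snd z') \<le> vee u u' dX (fst z) (fst z') + 2 * \<epsilon>"
proof -
  have mem: "fst z \<in> X" "fst z' \<in> X" "snd z \<in> Y" "snd z' \<in> Y"
    using T \<open>z \<in> Z\<close> \<open>z' \<in> Z\<close> unfolding is_eps_tripod_def is_tripod_def by auto
  obtain s where s: "s \<in> {u..u'}" "vee u u' dX (fst z) (fst z') = dX s (fst z) (fst z')"
    using vee_attained \<open>u \<le> u'\<close> is_DMSD(5)[OF \<open>is_DMS X dX\<close> mem(1,2)] by metis
  have "vee (u - \<epsilon>) (u' + \<epsilon>) dY (snd z) (snd z') \<le> vee (s - \<epsilon>) (s + \<epsilon>) dY (snd z) (snd z')"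
    using s(1) \<open>0 \<le> \<epsilon>\<close> is_DMSD(2)[OF \<open>is_DMS Y dY\<close> mem(3,4)] by (intro vee_antimono) auto
  also have "\<dots> \<le> dX s (fst z) (fst z') + 2 * \<epsilon>"
    using T \<open>z \<in> Z\<close> \<open>z' \<in> Z\<close> unfolding is_eps_tripod_def by blast
  finally show ?thesis using s(2) by simp
qed

lemma rtrancl_transfer_along_correspondence:
  assumes "Domain R \<subseteq> fst ` Z"
    and edge: "\<And>z z'. z \<in> Z \<Longrightarrow> z' \<in> Z \<Longrightarrow> (fst z, fst z') \<in> R\<^sup>= \<Longrightarrow> (snd z, snd z') \<in> S"
    and "z \<in> Z" and "z' \<in> Z" and "(fst z, fst z') \<in> R\<^sup>*"
  shows "(snd z, snd z') \<in> S\<^sup>*"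
proof -
  have "\<forall>z'\<in>Z. fst z' = b \<longrightarrow> (snd z, snd z') \<in> S\<^sup>*" if "(fst z, b) \<in> R\<^sup>*" for b
    using that
  proof (induction rule: rtrancl_induct)
    case base
    then show ?case using edge[OF \<open>z \<in> Z\<close>] by auto
  next
    case (step b c)
    obtain w where "w \<in> Z" "fst w = b"
      using \<open>(b, c) \<in> R\<close> assms(1) by force
    then show ?case
      using step.IH edge \<open>(b, c) \<in> R\<close> by (metis UnI1 rtrancl.rtrancl_into_rtrancl)
  qed
  then show ?thesis using assms(4,5) by blast
qed

lemma card_quotient_rtrancl_le:
  assumes "finite X" and "Z \<subseteq> X \<times> Y" and "snd ` Z = Y"
    and transfer: "\<And>z z'. z \<in> Z \<Longrightarrow> z' \<in> Z \<Longrightarrow> (fst z, fst z') \<in> R\<^sup>* \<Longrightarrow> (snd z, snd z') \<in> S\<^sup>*"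
  shows "card (Y // S\<^sup>*) \<le> card (X // R\<^sup>*)"
proof -
  define g where "g C = S\<^sup>* `` (snd ` {z \<in> Z. fst z \<in> C})" for C
  have "Y // S\<^sup>* \<subseteq> g ` (X // R\<^sup>*)"
  proof
    fix B assume "B \<in> Y // S\<^sup>*"
    then obtain z where z: "z \<in> Z" "B = S\<^sup>* `` {snd z}"
      using \<open>snd ` Z = Y\<close> unfolding quotient_def by force
    have "g (R\<^sup>* `` {fst z}) = B"
    proof
      show "g (R\<^sup>* `` {fst z}) \<subseteq> B"
      proof
        fix y assume "y \<in> g (R\<^sup>* `` {fst z})"
        then obtain z' where "z' \<in> Z" "(fst z, fst z') \<in> R\<^sup>*" "(snd z', y) \<in> S\<^sup>*"
          unfolding g_def by auto
        then have "(snd z, y) \<in> S\<^sup>*"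
          using transfer[OF \<open>z \<in> Z\<close>] by (blast intro: rtrancl_trans)
        then show "y \<in> B" using z(2) by blast
      qed
      show "B \<subseteq> g (R\<^sup>* `` {fst z})"
        using z unfolding g_def by force
    qed
    moreover have "R\<^sup>* `` {fst z} \<in> X // R\<^sup>*"
      using z(1) \<open>Z \<subseteq> X \<times> Y\<close> by (intro quotientI) force
    ultimately show "B \<in> g ` (X // R\<^sup>*)" by blast
  qed
  moreover have "finite (X // R\<^sup>*)"
    using \<open>finite X\<close> unfolding quotient_def by simp
  ultimately show ?thesis
    using surj_card_le by blast
qed

lemma betti0_fun_le_of_eps_tripod:
  assumes DX: "is_DMS X dX" and DY: "is_DMS Y dY" and T: "is_eps_tripod \<epsilon> X dX Y dY Z"
    and "0 \<le> \<epsilon>" and "u \<le> u'" and "0 \<le> \<delta>"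
  shows "betti0_fun Y dY (u - 2 * \<epsilon>) (u' + 2 * \<epsilon>) (\<delta> + 2 * \<epsilon>) \<le> betti0_fun X dX u u' \<delta>"
proof -
  define R where "R = shares_simplex (rips X (vee u u' dX) \<delta>)"
  define S where "S = shares_simplex (rips Y (vee (u - 2 * \<epsilon>) (u' + 2 * \<epsilon>) dY) (\<delta> + 2 * \<epsilon>))"
  have Z: "Z \<subseteq> X \<times> Y" "fst ` Z = X" "snd ` Z = Y"
    using T unfolding is_eps_tripod_def is_tripod_def by auto
  have R_iff: "(x, x') \<in> R \<longleftrightarrow> x \<in> X \<and> x' \<in> X \<and> vee u u' dX x x' \<le> \<delta>" for x x'
    unfolding R_def using \<open>u \<le> u'\<close> \<open>0 \<le> \<delta>\<close>
    by (intro shares_simplex_rips_iff) (simp_all add: vee_self vee_commute is_DMSD[OF DX])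
  have S_iff: "(y, y') \<in> S \<longleftrightarrow> y \<in> Y \<and> y' \<in> Y \<and> vee (u - 2 * \<epsilon>) (u' + 2 * \<epsilon>) dY y y' \<le> \<delta> + 2 * \<epsilon>"
    for y y'
    unfolding S_def using \<open>u \<le> u'\<close> \<open>0 \<le> \<delta>\<close> \<open>0 \<le> \<epsilon>\<close>
    by (intro shares_simplex_rips_iff) (simp_all add: vee_self vee_commute is_DMSD[OF DY])
  have edge: "(snd z, snd z') \<in> S" if "z \<in> Z" "z' \<in> Z" "(fst z, fst z') \<in> R\<^sup>=" for z z'
  proof -
    have mem: "fst z \<in> X" "snd z \<in> Y" "snd z' \<in> Y"
      using that(1,2) Z(1) by auto
    have "vee u u' dX (fst z) (fst z') \<le> \<delta>"
      using that(3) R_iff mem(1) \<open>u \<le> u'\<close> \<open>0 \<le> \<delta>\<close>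
      by (auto simp: vee_self is_DMSD(3)[OF DX])
    moreover have "vee (u - 2 * \<epsilon>) (u' + 2 * \<epsilon>) dY (snd z) (snd z')
        \<le> vee (u - \<epsilon>) (u' + \<epsilon>) dY (snd z) (snd z')"
      using mem(2,3) \<open>0 \<le> \<epsilon>\<close> \<open>u \<le> u'\<close> by (intro vee_antimono) (simp_all add: is_DMSD(2)[OF DY])
    moreover note is_eps_tripod_vee_le[OF DX DY T \<open>0 \<le> \<epsilon>\<close> \<open>u \<le> u'\<close> that(1,2)]
    ultimately show ?thesis
      using S_iff mem(2,3) by simp
  qed
  have "(snd z, snd z') \<in> S\<^sup>*" if "z \<in> Z" "z' \<in> Z" "(fst z, fst z') \<in> R\<^sup>*" for z z'
  proof (rule rtrancl_transfer_along_correspondence[OF _ edge that])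
    show "Domain R \<subseteq> fst ` Z" using R_iff Z(2) by blast
  qed
  then show ?thesis
    unfolding betti0_fun_eq_card_quotient R_def[symmetric] S_def[symmetric]
    by (rule card_quotient_rtrancl_le[OF is_DMSD(1)[OF DX] Z(1,3)])
qed

lemma d_I_betti0_fun_le_of_eps_tripod:
  assumes "is_DMS X dX" and "is_DMS Y dY" and "is_eps_tripod \<epsilon> X dX Y dY Z" and "0 \<le> \<epsilon>"
  shows "d_I (betti0_fun X dX) (betti0_fun Y dY) \<le> 2 * ereal \<epsilon>"
  unfolding d_I_def
  using assms betti0_fun_le_of_eps_tripod[OF assms]
    betti0_fun_le_of_eps_tripod[OF assms(2,1) is_eps_tripod_swap[OF assms(3)] assms(4)]
  by (intro Inf_lower imageI) auto

lemma ereal_le_mult_Inf: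
  fixes a :: ereal
  assumes "0 < c" and "\<And>x. x \<in> A \<Longrightarrow> a \<le> ereal c * x"
  shows "a \<le> ereal c * Inf A"
proof -
  have "a / ereal c \<le> Inf A"
    using assms by (intro Inf_greatest) (simp add: ereal_divide_le_pos)
  then show ?thesis
    using assms(1) by (simp add: ereal_divide_le_pos)
qed

theorem theorem4p5:
  fixes X :: "'a set" and dX :: "real \<Rightarrow> 'a \<Rightarrow> 'a \<Rightarrow> real"
    and Y :: "'b set" and dY :: "real \<Rightarrow> 'b \<Rightarrow> 'b \<Rightarrow> real"
  assumes "is_DMS X dX" and "is_DMS Y dY"
  shows "d_I (betti0_fun X dX) (betti0_fun Y dY) \<le> 2 * d_dyn X dX Y dY"
  unfolding d_dyn_def numeral_eq_ereal
  using d_I_betti0_fun_le_of_eps_tripod[OF assms]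
  by (auto intro!: ereal_le_mult_Inf)

end
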